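(* Let $\Delta \ge 2$ be an integer and let $\varepsilon > 0$. There is no local algorithm that, on every $2$-coloured graph $\mathcal{G}$ of maximum degree at most $\Delta$ (with the colouring given as input), outputs a dominating set $D$ of $\mathcal{G}$ with $|D| \le \bigl(\tfrac{\Delta+1}{2}-\varepsilon\bigr)\,|D^*|$, where $D^*$ is a minimum dominating set of $\mathcal{G}$. This holds even if the nodes have unique identifiers from $\{1,\dots,|V|\}$, know $|V|$, and messages and local computation are unbounded.
   Context: Model: a graph $\mathcal{G}=(V,E)$ without isolated nodes is a distributed system; every node runs the same deterministic algorithm. Communication is synchronous: in each round every node receives messages from its neighbours, performs local computation, and sends messages to its neighbours. Each node knows its degree, its own input label (e.g. its colour), and the global degree bound $\Delta$. A local algorithm is one that terminates after $T$ rounds, where $T$ may depend on $\Delta$ but not on the number of nodes; its output at a node is whether the node belongs to the solution (for edge problems, which incident edges belong to it). A $2$-colouring assigns each node black or white so that adjacent nodes have different colours; it is given as input (each node knows its colour). An algorithm has approximation factor $\alpha$ for a minimisation problem if its output is always feasible with size at most $\alpha$ times the optimum. *)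

theory Defs
  imports Main "HOL.Real"
begin

definition nbrs :: "nat set \<Rightarrow> (nat \<Rightarrow> nat \<Rightarrow> bool) \<Rightarrow> nat \<Rightarrow> nat set" where
  "nbrs V E v = {u \<in> V. E v u}"

definition deg :: "nat set \<Rightarrow> (nat \<Rightarrow> nat \<Rightarrow> bool) \<Rightarrow> nat \<Rightarrow> nat" where
  "deg V E v = card (nbrs V E v)"

definition graph_ok :: "nat \<Rightarrow> nat set \<Rightarrow> (nat \<Rightarrow> nat \<Rightarrow> bool) \<Rightarrow> bool" where
  "graph_ok \<Delta> V E \<longleftrightarrow> finite V \<and>
     (\<forall>u v. E u v \<longrightarrow> u \<in> V \<and> v \<in> V \<and> u \<noteq> v \<and> E v u) \<and>
     (\<forall>v \<in> V. 1 \<le> deg V E v \<and> deg V E v \<le> \<Delta>)"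

text \<open>Proper 2-colouring (True = black, False = white).\<close>
definition proper_2col :: "nat set \<Rightarrow> (nat \<Rightarrow> nat \<Rightarrow> bool) \<Rightarrow> (nat \<Rightarrow> bool) \<Rightarrow> bool" where
  "proper_2col V E col \<longleftrightarrow> (\<forall>u \<in> V. \<forall>v \<in> V. E u v \<longrightarrow> col u \<noteq> col v)"

definition valid_ids :: "nat set \<Rightarrow> (nat \<Rightarrow> nat) \<Rightarrow> bool" where
  "valid_ids V idf \<longleftrightarrow> inj_on idf V \<and> idf ` V = {1..card V}"

definition port_numbering :: "nat set \<Rightarrow> (nat \<Rightarrow> nat \<Rightarrow> bool) \<Rightarrow> (nat \<Rightarrow> nat \<Rightarrow> nat) \<Rightarrow> bool" where
  "port_numbering V E p \<longleftrightarrow> (\<forall>v \<in> V. bij_betw (p v) {..<deg V E v} (nbrs V E v))"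

definition back_port :: "nat set \<Rightarrow> (nat \<Rightarrow> nat \<Rightarrow> bool) \<Rightarrow> (nat \<Rightarrow> nat \<Rightarrow> nat) \<Rightarrow> nat \<Rightarrow> nat \<Rightarrow> nat" where
  "back_port V E p v i = (THE j. j < deg V E (p v i) \<and> p (p v i) j = v)"

definition dominating :: "nat set \<Rightarrow> (nat \<Rightarrow> nat \<Rightarrow> bool) \<Rightarrow> nat set \<Rightarrow> bool" where
  "dominating V E D \<longleftrightarrow> D \<subseteq> V \<and> (\<forall>v \<in> V. v \<in> D \<or> (\<exists>u \<in> D. E u v))"

definition domination_number :: "nat set \<Rightarrow> (nat \<Rightarrow> nat \<Rightarrow> bool) \<Rightarrow> nat" where
  "domination_number V E = Min {card D | D. dominating V E D}"

text \<open>A deterministic algorithm with arbitrary (unbounded) local states 's and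
messages 'm.  Initial state depends on Delta, the node's degree, its colour,
its identifier and the number of nodes |V|.  In each round a node sends
a_send s i to the neighbour behind port i, then updates its state from the
vector of received messages (indexed by its own ports; None beyond its degree).\<close>
record ('s, 'm) algorithm =
  a_init :: "nat \<Rightarrow> nat \<Rightarrow> bool \<Rightarrow> nat \<Rightarrow> nat \<Rightarrow> 's"
  a_send :: "'s \<Rightarrow> nat \<Rightarrow> 'm"
  a_step :: "'s \<Rightarrow> (nat \<Rightarrow> 'm option) \<Rightarrow> 's"
  a_out  :: "'s \<Rightarrow> bool"

fun run :: "('s, 'm) algorithm \<Rightarrow> nat \<Rightarrow> nat set \<Rightarrow> (nat \<Rightarrow> nat \<Rightarrow> bool) \<Rightarrow>
            (nat \<Rightarrow> nat \<Rightarrow> nat) \<Rightarrow> (nat \<Rightarrow> bool) \<Rightarrow> (nat \<Rightarrow> nat) \<Rightarrow> nat \<Rightarrow> nat \<Rightarrow> 's" where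
  "run A \<Delta> V E p col idf 0 v = a_init A \<Delta> (deg V E v) (col v) (idf v) (card V)"
| "run A \<Delta> V E p col idf (Suc t) v =
     a_step A (run A \<Delta> V E p col idf t v)
       (\<lambda>i. if i < deg V E v
            then Some (a_send A (run A \<Delta> V E p col idf t (p v i)) (back_port V E p v i))
            else None)"

definition local_output :: "('s, 'm) algorithm \<Rightarrow> nat \<Rightarrow> nat set \<Rightarrow> (nat \<Rightarrow> nat \<Rightarrow> bool) \<Rightarrow>
            (nat \<Rightarrow> nat \<Rightarrow> nat) \<Rightarrow> (nat \<Rightarrow> bool) \<Rightarrow> (nat \<Rightarrow> nat) \<Rightarrow> nat \<Rightarrow> nat set" where
  "local_output A \<Delta> V E p col idf T = {v \<in> V. a_out A (run A \<Delta> V E p col idf T v)}"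

end

theory Submission
  imports Defs "HOL-Library.Ramsey"
begin

(* Fix an algorithm A running T rounds.  The counterexample is the band graph on n = Q(2D+2)
   nodes, where an even node i is adjacent to the odd nodes i+1, i+3, ..., i+2D-1: it is
   properly 2-coloured by parity, has maximum degree D, and its domination number is at
   most 2Q (the ends of the Q segments of length 2D+2 dominate).  By locality, an interior
   node's output is determined by its colour and the sorted window of identifiers within
   distance 2DT.  Colour each (4TD+1)-set of identifiers by the outputs it would produce for a
   black and a white node; Ramsey's theorem yields blocks of 2M identifiers on which this
   colour is constant.  Laid out consecutively, within each block the output depends only on
   the node colour, and domination forces a whole colour class of the block interior into the
   output.  So the output has about Q(D+1) nodes, more than ((D+1)/2 - e) 2Q when M, Q are large. *)

definition band_adj :: "nat \<Rightarrow> nat \<Rightarrow> nat \<Rightarrow> nat \<Rightarrow> bool" where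
  "band_adj D n i j \<longleftrightarrow> i < n \<and> j < n \<and>
     ((even i \<and> odd j \<and> i < j \<and> j < i + 2*D) \<or> (even j \<and> odd i \<and> j < i \<and> i < j + 2*D))"

definition band_port :: "nat \<Rightarrow> nat \<Rightarrow> nat" where
  "band_port i k = (if even i then i + (2*k+1) else i - (2*k+1))"

definition band_deg :: "nat \<Rightarrow> nat \<Rightarrow> nat \<Rightarrow> nat" where
  "band_deg D n i = (if even i then min D ((n - i) div 2) else min D ((i+1) div 2))"

lemma nbrs_band:
  assumes "i < n"
  shows "nbrs {..<n} (band_adj D n) i = band_port i ` {..<band_deg D n i}"
proof (cases "even i")
  case True
  show ?thesis
  proof (intro equalityI subsetI)
    fix j assume "j \<in> nbrs {..<n} (band_adj D n) i"
    then have j: "j < n" "odd j" "i < j" "j < i + 2*D"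
      using True by (auto simp: nbrs_def band_adj_def)
    define k where "k = (j - i - 1) div 2"
    have "j = i + (2*k+1)" using j True unfolding k_def by presburger
    moreover have "k < band_deg D n i"
      using j True unfolding k_def band_deg_def by (auto; presburger)
    ultimately show "j \<in> band_port i ` {..<band_deg D n i}"
      using True unfolding band_port_def by auto
  next
    fix j assume "j \<in> band_port i ` {..<band_deg D n i}"
    then obtain k where k: "k < band_deg D n i" "j = i + (2*k+1)"
      using True by (auto simp: band_port_def)
    then have "k < D" "2*k+1 < n - i" using True by (auto simp: band_deg_def)
    then show "j \<in> nbrs {..<n} (band_adj D n) i"
      using k True by (auto simp: nbrs_def band_adj_def)
  qed
next
  case False
  show ?thesis
  proof (intro equalityI subsetI)
    fix j assume "j \<in> nbrs {..<n} (band_adj D n) i"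
    then have j: "j < n" "even j" "j < i" "i < j + 2*D"
      using False by (auto simp: nbrs_def band_adj_def)
    define k where "k = (i - j - 1) div 2"
    have "j = i - (2*k+1)" using j False unfolding k_def by presburger
    moreover have "k < band_deg D n i"
      using j False unfolding k_def band_deg_def by (auto; presburger)
    ultimately show "j \<in> band_port i ` {..<band_deg D n i}"
      using False unfolding band_port_def by auto
  next
    fix j assume "j \<in> band_port i ` {..<band_deg D n i}"
    then obtain k where k: "k < band_deg D n i" "j = i - (2*k+1)"
      using False by (auto simp: band_port_def)
    then have "k < D" "k < (i+1) div 2" using False by (auto simp: band_deg_def)
    moreover from this have "2*k+1 \<le> i" using False by presburger
    ultimately show "j \<in> nbrs {..<n} (band_adj D n) i"
      using k False assms by (auto simp: nbrs_def band_adj_def)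
  qed
qed

lemma inj_band_port: "inj_on (band_port i) {..<band_deg D n i}"
proof (rule inj_onI)
  fix k k' assume k: "k \<in> {..<band_deg D n i}" "k' \<in> {..<band_deg D n i}"
    and eq: "band_port i k = band_port i k'"
  show "k = k'"
  proof (cases "even i")
    case True
    then show ?thesis using eq by (simp add: band_port_def)
  next
    case False
    then have "2*k+1 \<le> i" "2*k'+1 \<le> i" using k by (auto simp: band_deg_def; presburger)+
    then show ?thesis using eq False by (simp add: band_port_def)
  qed
qed

lemma deg_band: "i < n \<Longrightarrow> deg {..<n} (band_adj D n) i = band_deg D n i"
  using nbrs_band[of i n D] inj_band_port[of i D n] by (simp add: deg_def card_image)

lemma band_deg_pos:
  assumes "i < n" "even n" "1 \<le> D"
  shows "1 \<le> band_deg D n i"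
proof (cases "even i")
  case True
  then have "2 \<le> n - i" using assms by presburger
  then show ?thesis using True assms by (simp add: band_deg_def)
next
  case False
  then have "1 \<le> i" by presburger
  then show ?thesis using False assms by (simp add: band_deg_def)
qed

lemma graph_ok_band: "even n \<Longrightarrow> 1 \<le> D \<Longrightarrow> graph_ok D {..<n} (band_adj D n)"
  unfolding graph_ok_def using band_deg_pos deg_band by (auto simp: band_adj_def band_deg_def)

lemma proper_2col_band: "proper_2col {..<n} (band_adj D n) even"
  unfolding proper_2col_def by (auto simp: band_adj_def)

lemma port_numbering_band: "port_numbering {..<n} (band_adj D n) band_port"
  unfolding port_numbering_def using deg_band nbrs_band inj_band_port by (simp add: bij_betw_def)

text \<open>A node is interior at depth t if every node it can reach in t+1 rounds has full
  degree D; the algorithm's view from there is a translate of the view from any other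
  interior node of the same colour.\<close>
definition interior :: "nat \<Rightarrow> nat \<Rightarrow> nat \<Rightarrow> nat \<Rightarrow> bool" where
  "interior D n t v \<longleftrightarrow> (t+1)*(2*D) \<le> v \<and> v + (t+1)*(2*D) < n"

lemma interior_mono:
  assumes "interior D n t v" "t' \<le> t"
  shows "interior D n t' v"
proof -
  have "(t'+1)*(2*D) \<le> (t+1)*(2*D)" using assms(2) by simp
  then show ?thesis using assms(1) unfolding interior_def by linarith
qed

lemma interior_port:
  assumes "interior D n (Suc t) v" "i < D"
  shows "interior D n t (band_port v i)"
proof -
  have "(Suc t + 1)*(2*D) = (t+1)*(2*D) + 2*D" by (simp add: algebra_simps)
  moreover have "2*i+1 < 2*D" using assms(2) by simp
  ultimately show ?thesis using assms(1) unfolding interior_def band_port_def by auto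
qed

lemma deg_interior: "interior D n t v \<Longrightarrow> deg {..<n} (band_adj D n) v = D"
  using interior_mono[of D n t v 0] deg_band[of v n D]
  by (auto simp: interior_def band_deg_def)

lemma back_port_interior:
  assumes v: "interior D n t v" and i: "i < D"
  shows "back_port {..<n} (band_adj D n) band_port v i = i"
proof -
  let ?u = "band_port v i"
  have v0: "2*D \<le> v" "v + 2*D < n" using interior_mono[OF v, of 0] by (auto simp: interior_def)
  have "?u < n" using v0 i by (auto simp: band_port_def)
  then have deg_u: "deg {..<n} (band_adj D n) ?u = D"
    using v0 i deg_band[of ?u n D] by (auto simp: band_port_def band_deg_def)
  have u_back: "band_port ?u i = v" using v0 i by (auto simp: band_port_def)
  show ?thesis unfolding back_port_def
  proof (rule the_equality)
    show "i < deg {..<n} (band_adj D n) ?u \<and> band_port ?u i = v" using deg_u u_back i by simp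
  next
    fix j assume "j < deg {..<n} (band_adj D n) ?u \<and> band_port ?u j = v"
    then show "j = i" using u_back deg_u v0 i by (auto simp: band_port_def split: if_splits)
  qed
qed

lemma band_port_offset:
  "i < D \<Longrightarrow> 2*D \<le> v \<Longrightarrow>
     int (band_port v i) = int v + (if even v then int (2*i+1) else - int (2*i+1))"
  by (auto simp: band_port_def)

lemma run_shift_invariant:
  assumes "interior D n t v" "interior D n t v'" "even v = even v'"
    and "\<forall>d::int. \<bar>d\<bar> \<le> int (t*(2*D)) \<longrightarrow> idf (nat (int v + d)) = idf' (nat (int v' + d))"
  shows "run A D {..<n} (band_adj D n) band_port even idf t v
       = run A D {..<n} (band_adj D n) band_port even idf' t v'"
  using assms
proof (induction t arbitrary: v v')
  case 0
  then have "idf (nat (int v + 0)) = idf' (nat (int v' + 0))" by simp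
  then show ?case using 0 deg_interior[of D n 0] by simp
next
  case (Suc t)
  let ?run = "\<lambda>idf. run A D {..<n} (band_adj D n) band_port even idf t"
  have same_state: "?run idf v = ?run idf' v'"
  proof (rule Suc.IH)
    show "interior D n t v" "interior D n t v'" using Suc.prems(1,2) interior_mono by auto
    show "\<forall>d::int. \<bar>d\<bar> \<le> int (t*(2*D)) \<longrightarrow> idf (nat (int v + d)) = idf' (nat (int v' + d))"
    proof (intro allI impI)
      fix d :: int assume "\<bar>d\<bar> \<le> int (t*(2*D))"
      moreover have "int (t*(2*D)) \<le> int (Suc t*(2*D))" by simp
      ultimately show "idf (nat (int v + d)) = idf' (nat (int v' + d))"
        using Suc.prems(4) by (meson order_trans)
    qed
  qed (use Suc.prems in simp)
  have same_msgs: "?run idf (band_port v i) = ?run idf' (band_port v' i)" if i: "i < D" for i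
  proof (rule Suc.IH)
    show "interior D n t (band_port v i)" "interior D n t (band_port v' i)"
      using Suc.prems(1,2) interior_port i by blast+
    show "even (band_port v i) = even (band_port v' i)" using Suc.prems(3) by (simp add: band_port_def)
    define s where "s = (if even v then int (2*i+1) else - int (2*i+1))"
    have "2*D \<le> v" "2*D \<le> v'" using Suc.prems(1,2) interior_mono[of D n _ _ 0] by (auto simp: interior_def)
    then have ports: "int (band_port v i) = int v + s" "int (band_port v' i) = int v' + s"
      using band_port_offset[of i D] i Suc.prems(3) unfolding s_def by auto
    have "\<bar>s\<bar> \<le> 2 * int D" using i unfolding s_def by auto
    moreover have "int (Suc t*(2*D)) = int (t*(2*D)) + 2*int D" by (simp add: algebra_simps)
    ultimately have "\<bar>s + d\<bar> \<le> int (Suc t*(2*D))" if "\<bar>d\<bar> \<le> int (t*(2*D))" for d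
      using that by linarith
    then show "\<forall>d::int. \<bar>d\<bar> \<le> int (t*(2*D)) \<longrightarrow>
        idf (nat (int (band_port v i) + d)) = idf' (nat (int (band_port v' i) + d))"
      using Suc.prems(4) ports by (simp add: add.assoc)
  qed
  show ?case
    using same_state same_msgs deg_interior[OF Suc.prems(1)] deg_interior[OF Suc.prems(2)]
      back_port_interior[OF Suc.prems(1)] back_port_interior[OF Suc.prems(2)]
    by (simp cong: if_cong)
qed

text \<open>To compare nodes of different blocks, the output of an interior node is transported
  to a fixed reference node of the same colour that sees a given set X of 4TD+1
  identifiers, placed in increasing order around it.\<close>
definition canon_node :: "nat \<Rightarrow> nat \<Rightarrow> bool \<Rightarrow> nat" where
  "canon_node D T c = (T+1)*(2*D) + (if c then 0 else 1)"

definition window_ids :: "nat \<Rightarrow> nat \<Rightarrow> bool \<Rightarrow> nat set \<Rightarrow> nat \<Rightarrow> nat" where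
  "window_ids D T c X k = sorted_list_of_set X ! (k + T*(2*D) - canon_node D T c)"

definition window_output :: "('s, 'm) algorithm \<Rightarrow> nat \<Rightarrow> nat \<Rightarrow> nat \<Rightarrow> bool \<Rightarrow> nat set \<Rightarrow> bool" where
  "window_output A D n T c X =
     a_out A (run A D {..<n} (band_adj D n) band_port even (window_ids D T c X) T (canon_node D T c))"

lemma output_determined_by_window:
  assumes v: "interior D n T v" and n: "2*((T+1)*(2*D)) + 1 < n"
    and L: "length L = 2*(T*(2*D))+1" "sorted L" "distinct L"
    and ids: "\<forall>j<length L. idf (v - T*(2*D) + j) = L!j"
  shows "a_out A (run A D {..<n} (band_adj D n) band_port even idf T v)
       = window_output A D n T (even v) (set L)"
proof -
  define R where "R = T*(2*D)"
  let ?c = "even v" and ?w = "canon_node D T (even v)"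
  have R_le: "R \<le> (T+1)*(2*D)" unfolding R_def by simp
  have R_v: "R \<le> v" and R_w: "R \<le> ?w"
    using v R_le unfolding interior_def canon_node_def by linarith+
  have w: "interior D n T ?w" using n unfolding interior_def canon_node_def by (auto simp: algebra_simps)
  have len_L: "length L = 2*R+1" and ids_R: "\<forall>j<length L. idf (v - R + j) = L!j"
    using L(1) ids unfolding R_def by simp_all
  have sorted_L: "sorted_list_of_set (set L) = L"
    using L by (simp add: sorted_list_of_set.idem_if_sorted_distinct)
  have "run A D {..<n} (band_adj D n) band_port even idf T v
      = run A D {..<n} (band_adj D n) band_port even (window_ids D T ?c (set L)) T ?w"
  proof (rule run_shift_invariant[OF v w])
    show "even v = even ?w" unfolding canon_node_def by auto
    show "\<forall>d::int. \<bar>d\<bar> \<le> int (T*(2*D)) \<longrightarrow>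
        idf (nat (int v + d)) = window_ids D T ?c (set L) (nat (int ?w + d))"
    proof (intro allI impI)
      fix d :: int assume "\<bar>d\<bar> \<le> int (T*(2*D))"
      then have d: "\<bar>d\<bar> \<le> int R" unfolding R_def .
      define j where "j = nat (int R + d)"
      have j: "j < length L" using d len_L unfolding j_def by auto
      have "nat (int v + d) = v - R + j" using d R_v unfolding j_def by auto
      then have "idf (nat (int v + d)) = L!j" using ids_R j by simp
      moreover have "nat (int ?w + d) + R - ?w = j" using d R_w unfolding j_def by auto
      then have "window_ids D T ?c (set L) (nat (int ?w + d)) = L!j"
        unfolding window_ids_def sorted_L R_def by simp
      ultimately show "idf (nat (int v + d)) = window_ids D T ?c (set L) (nat (int ?w + d))" by simp
    qed
  qed
  then show ?thesis unfolding window_output_def by simp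
qed

definition homogeneous :: "(nat set \<Rightarrow> nat) \<Rightarrow> nat \<Rightarrow> nat set \<Rightarrow> bool" where
  "homogeneous f r H \<longleftrightarrow> (\<exists>i. \<forall>Y\<in>[H]\<^bsup>r\<^esup>. f Y = i)"

lemma ramsey_subset:
  assumes P: "partn_lst {..<N} [m,m,m,m] r" and U: "finite U" "N \<le> card U"
    and f: "\<forall>X. f X < (4::nat)"
  shows "\<exists>H. H \<subseteq> U \<and> card H = m \<and> homogeneous f r H"
proof -
  obtain g where g: "g ` {..<N} \<subseteq> U" "inj_on g {..<N}"
    using card_le_inj[of "{..<N}" U] U by auto
  have f_g: "f \<circ> (\<lambda>X. g ` X) \<in> [{..<N}]\<^bsup>r\<^esup> \<rightarrow> {..<4}" using f by auto
  obtain i H' where i: "i < length [m,m,m,m]" and H': "H' \<in> [{..<N}]\<^bsup>([m,m,m,m]!i)\<^esup>"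
     and hom: "(f \<circ> (\<lambda>X. g ` X)) ` ([H']\<^bsup>r\<^esup>) \<subseteq> {i}"
    using partn_lstE[OF P f_g] by auto
  have "[m,m,m,m]!i = m" using i by (auto simp: less_Suc_eq nth_Cons')
  then have H'_sub: "H' \<subseteq> {..<N}" and H'_card: "card H' = m" using H' by (auto simp: nsets_def)
  have g_inj: "inj_on g H'" using g(2) H'_sub inj_on_subset by blast
  show ?thesis
  proof (intro exI conjI)
    show "g ` H' \<subseteq> U" using g(1) H'_sub by blast
    show "card (g ` H') = m" using g_inj H'_card card_image by metis
    show "homogeneous f r (g ` H')" unfolding homogeneous_def
    proof (intro exI ballI)
      fix Y assume "Y \<in> [g ` H']\<^bsup>r\<^esup>"
      then obtain X where "X \<in> [H']\<^bsup>r\<^esup>" "Y = g ` X" using nset_image_obtains g_inj by metis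
      then show "f Y = i" using hom by auto
    qed
  qed
qed

lemma ramsey_blocks:
  assumes P: "partn_lst {..<N} [m,m,m,m] r" and f: "\<forall>X. f X < (4::nat)" and m: "0 < m"
    and U: "finite U"
  shows "\<exists>Ls rest. distinct (concat Ls @ rest) \<and> set (concat Ls @ rest) = U \<and> length rest < N \<and>
           (\<forall>L\<in>set Ls. sorted L \<and> distinct L \<and> length L = m \<and> homogeneous f r (set L))"
  using U
proof (induction "card U" arbitrary: U rule: less_induct)
  case less
  show ?case
  proof (cases "card U < N")
    case True
    then show ?thesis using less.prems
      by (intro exI[of _ "[]"] exI[of _ "sorted_list_of_set U"]) auto
  next
    case False
    then obtain H where H: "H \<subseteq> U" "card H = m" "homogeneous f r H"
      using ramsey_subset[OF P less.prems] f by (meson not_le)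
    have fin_H: "finite H" using H(1) less.prems finite_subset by blast
    have "card (U - H) < card U"
      using card_Diff_subset[OF fin_H H(1)] card_mono[OF less.prems H(1)] H(2) m by linarith
    then obtain Ls rest where IH: "distinct (concat Ls @ rest)" "set (concat Ls @ rest) = U - H"
        "length rest < N" "\<forall>L\<in>set Ls. sorted L \<and> distinct L \<and> length L = m \<and> homogeneous f r (set L)"
      using less.hyps[of "U - H"] less.prems by blast
    show ?thesis
      using IH H fin_H by (intro exI[of _ "sorted_list_of_set H # Ls"] exI[of _ rest]) auto
  qed
qed

lemma nth_concat_blocks:
  assumes "\<forall>L\<in>set Ls. length L = m" "s < length Ls" "j < m"
  shows "(concat Ls @ rest) ! (s*m + j) = Ls!s!j"
  using assms
proof (induction Ls arbitrary: s)
  case (Cons L Ls)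
  then show ?case by (cases s) (auto simp: nth_append algebra_simps)
qed simp

lemma length_concat_blocks: "\<forall>L\<in>set Ls. length L = m \<Longrightarrow> length (concat Ls) = length Ls * m"
  by (induction Ls) auto

lemma block_identifiers:
  assumes P: "partn_lst {..<N} [m,m,m,m] r" and f: "\<forall>X. f X < (4::nat)" and m: "0 < m"
  obtains Ls rest where "valid_ids {..<n} (\<lambda>i. (concat Ls @ rest) ! i)"
    "length Ls * m + length rest = n" "length rest < N"
    "\<forall>L\<in>set Ls. sorted L \<and> distinct L \<and> length L = m \<and> homogeneous f r (set L)"
proof -
  obtain Ls rest where LR: "distinct (concat Ls @ rest)" "set (concat Ls @ rest) = {1..n}"
      "length rest < N" "\<forall>L\<in>set Ls. sorted L \<and> distinct L \<and> length L = m \<and> homogeneous f r (set L)"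
    using ramsey_blocks[OF P f m, of "{1..n}"] by blast
  let ?LL = "concat Ls @ rest"
  have len: "length ?LL = n" using distinct_card[OF LR(1)] LR(2) by simp
  have "valid_ids {..<n} (\<lambda>i. ?LL ! i)"
    unfolding valid_ids_def
  proof
    show "inj_on (\<lambda>i. ?LL ! i) {..<n}" using inj_on_nth[OF LR(1), of "{..<n}"] len by simp
    have "(\<lambda>i. ?LL ! i) ` {..<n} = set ?LL" using len by (auto simp: set_conv_nth)
    then show "(\<lambda>i. ?LL ! i) ` {..<n} = {1..card {..<n}}" using LR(2) by simp
  qed
  moreover have "length Ls * m + length rest = n"
    using len length_concat_blocks[of Ls m] LR(4) by simp
  ultimately show ?thesis using that LR(3,4) by blast
qed

lemma domination_number_le:
  assumes "finite V" "dominating V E D"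
  shows "domination_number V E \<le> card D"
proof -
  have "{card X |X. dominating V E X} \<subseteq> card ` Pow V" by (auto simp: dominating_def)
  then have "finite {card X |X. dominating V E X}" using assms(1) finite_subset by blast
  then show ?thesis unfolding domination_number_def using assms(2) by (intro Min_le) auto
qed

text \<open>Cut the band graph into segments of 2D+2 consecutive nodes; the first (even) node of a
  segment dominates its odd nodes and the last (odd) node its even nodes.\<close>
definition segment_ends :: "nat \<Rightarrow> nat \<Rightarrow> nat set" where
  "segment_ends D Q = (\<lambda>q. q*(2*D+2)) ` {..<Q} \<union> (\<lambda>q. q*(2*D+2) + (2*D+1)) ` {..<Q}"

lemma card_segment_ends: "card (segment_ends D Q) \<le> 2*Q"
proof -
  have "card (segment_ends D Q)
      \<le> card ((\<lambda>q. q*(2*D+2)) ` {..<Q}) + card ((\<lambda>q. q*(2*D+2) + (2*D+1)) ` {..<Q})"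
    unfolding segment_ends_def by (rule card_Un_le)
  also have "\<dots> \<le> Q + Q" by (intro add_mono) (metis card_image_le card_lessThan finite_lessThan)+
  finally show ?thesis by simp
qed

lemma dominating_segment_ends:
  assumes n: "n = Q*(2*D+2)"
  shows "dominating {..<n} (band_adj D n) (segment_ends D Q)"
  unfolding dominating_def
proof (intro conjI ballI)
  define P where "P = 2*D+2"
  have end_lt: "q*P + P \<le> n" if "q < Q" for q
    using that n unfolding P_def by (metis Suc_leI mult_Suc mult_le_mono1 add.commute)
  show "segment_ends D Q \<subseteq> {..<n}"
    using end_lt unfolding segment_ends_def P_def by fastforce
  fix v assume "v \<in> {..<n}"
  define q where "q = v div P"
  define \<rho> where "\<rho> = v mod P"
  have v: "v = q*P + \<rho>" unfolding q_def \<rho>_def by simp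
  have \<rho>: "\<rho> < P" unfolding \<rho>_def P_def by simp
  have q: "q < Q" using \<open>v \<in> {..<n}\<close> n unfolding q_def P_def by (simp add: less_mult_imp_div_less)
  have ends: "q*P \<in> segment_ends D Q" "q*P + (P - 1) \<in> segment_ends D Q"
    using q unfolding segment_ends_def P_def by auto
  have "even (q*P)" unfolding P_def by simp
  then have "\<rho> = 0 \<or> \<rho> = P - 1 \<or> band_adj D n (q*P) v \<or> band_adj D n (q*P + (P - 1)) v"
    using v \<rho> end_lt[OF q] \<open>v \<in> {..<n}\<close> unfolding band_adj_def P_def by (auto; presburger)
  then show "v \<in> segment_ends D Q \<or> (\<exists>u\<in>segment_ends D Q. band_adj D n u v)"
    using ends v by auto
qed

lemma domination_number_band: "domination_number {..<Q*(2*D+2)} (band_adj D (Q*(2*D+2))) \<le> 2*Q"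
  by (rule le_trans[OF domination_number_le[OF finite_lessThan dominating_segment_ends[OF refl]]
                      card_segment_ends])

definition window_colour :: "('s, 'm) algorithm \<Rightarrow> nat \<Rightarrow> nat \<Rightarrow> nat \<Rightarrow> nat set \<Rightarrow> nat" where
  "window_colour A D n T X =
     (if window_output A D n T True X then 2 else 0) + (if window_output A D n T False X then 1 else 0)"

lemma window_colour_lt: "\<forall>X. window_colour A D n T X < 4"
  unfolding window_colour_def by auto

lemma window_output_colour:
  "window_output A D n T c X =
     (if c then 2 \<le> window_colour A D n T X else odd (window_colour A D n T X))"
  unfolding window_colour_def by auto

lemma block_output_by_colour:
  fixes A :: "('s, 'm) algorithm"
  assumes n: "2*((T+1)*(2*D)) + 1 < n" and block: "s*m + m \<le> n" "even m"
    and L: "sorted L" "distinct L" "length L = m"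
      "homogeneous (window_colour A D n T) (2*(T*(2*D))+1) (set L)"
    and ids: "\<forall>j<m. idf (s*m + j) = L!j"
  obtains out where "\<And>x. (T+1)*(2*D) \<le> x \<Longrightarrow> x + (T+1)*(2*D) < m \<Longrightarrow>
    s*m + x \<in> local_output A D {..<n} (band_adj D n) band_port even idf T \<longleftrightarrow> out (even x)"
proof -
  define R where "R = T*(2*D)"
  have C: "(T+1)*(2*D) = R + 2*D" unfolding R_def by (simp add: algebra_simps)
  obtain i where i: "\<forall>Y \<in> nsets (set L) (2*R+1). window_colour A D n T Y = i"
    using L(4) unfolding homogeneous_def R_def by blast
  have "s*m + x \<in> local_output A D {..<n} (band_adj D n) band_port even idf T
        \<longleftrightarrow> (if even x then 2 \<le> i else odd i)"
    if x: "(T+1)*(2*D) \<le> x" "x + (T+1)*(2*D) < m" for x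
  proof -
    let ?v = "s*m + x" and ?W = "take (2*R+1) (drop (x - R) L)"
    have v: "interior D n T ?v" using x block(1) unfolding interior_def by linarith
    have fits: "x - R + (2*R+1) \<le> m" using x C by linarith
    have W: "length ?W = 2*R+1" "sorted ?W" "distinct ?W"
      using fits L by (auto simp: sorted_wrt_take sorted_wrt_drop)
    have "\<forall>j<length ?W. idf (?v - R + j) = ?W!j"
    proof (intro allI impI)
      fix j assume "j < length ?W"
      then have j: "j < 2*R+1" using W(1) by simp
      have jm: "x - R + j < m" using j fits by linarith
      have shift: "?v - R + j = s*m + (x - R + j)" using x C by linarith
      have "idf (?v - R + j) = L!(x - R + j)" unfolding shift using ids jm by blast
      then show "idf (?v - R + j) = ?W!j" using j fits L(3) by simp
    qed
    then have out: "a_out A (run A D {..<n} (band_adj D n) band_port even idf T ?v)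
                  = window_output A D n T (even ?v) (set ?W)"
      using output_determined_by_window[OF v n] W unfolding R_def by blast
    have "set ?W \<in> nsets (set L) (2*R+1)"
      using W distinct_card[of ?W] by (auto simp: nsets_def dest: in_set_takeD in_set_dropD)
    then have "window_colour A D n T (set ?W) = i" using i by blast
    moreover have "?v < n" "even ?v = even x" using x block by auto
    ultimately show ?thesis using out window_output_colour[of A D n T "even x" "set ?W"]
      by (simp add: local_output_def)
  qed
  then show ?thesis using that[of "\<lambda>c. if c then 2 \<le> i else odd i"] by simp
qed

lemma dominated_block_colour_class:
  assumes dom: "dominating {..<n} (band_adj D n) Ds" and block: "s*m + m \<le> n" "m = 2*M"
    and C: "even C" "C + 2*D < M"
    and out: "\<And>x. C \<le> x \<Longrightarrow> x + C < m \<Longrightarrow> s*m + x \<in> Ds \<longleftrightarrow> out (even x)"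
  shows "\<exists>\<delta>::nat. \<delta> \<le> 1 \<and> (\<forall>j < M - C. s*m + (C + 2*j + \<delta>) \<in> Ds)"
proof -
  have "out True \<or> out False"
  proof (rule ccontr)
    assume none: "\<not> (out True \<or> out False)"
    let ?x = "C + 2*D"
    have x: "C \<le> ?x" "?x + C < m" "even ?x" using block C by auto
    then have "s*m + ?x \<notin> Ds" "s*m + ?x < n" using out[OF x(1,2)] none block by auto
    then obtain u where u: "u \<in> Ds" "band_adj D n u (s*m + ?x)" using dom unfolding dominating_def by auto
    then have "s*m + C < u" "u < s*m + C + 4*D" using x(3) unfolding band_adj_def by auto
    then have "u = s*m + (u - s*m)" "C \<le> u - s*m" "u - s*m + C < m" using block C by linarith+
    then show False using out none u(1) by metis
  qed
  then obtain \<delta> :: nat where \<delta>: "\<delta> \<le> 1" "out (even (C + \<delta>))"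
    by (metis C(1) even_add le_numeral_extra(4) odd_one zero_le_one add_0_right)
  have "s*m + (C + 2*j + \<delta>) \<in> Ds" if "j < M - C" for j
    using out[of "C + 2*j + \<delta>"] \<delta> that block C by auto
  then show ?thesis using \<delta>(1) by blast
qed

lemma output_lower_bound:
  fixes A :: "('s, 'm) algorithm" and T D :: nat
  defines "C \<equiv> (T+1)*(2*D)"
  assumes m: "m = 2*M" and M: "C + 2*D < M" and n: "2*C + 1 < n" "length Ls * m \<le> n"
    and Ls: "\<forall>L\<in>set Ls. sorted L \<and> distinct L \<and> length L = m \<and>
               homogeneous (window_colour A D n T) (2*(T*(2*D))+1) (set L)"
    and dom: "dominating {..<n} (band_adj D n)
                (local_output A D {..<n} (band_adj D n) band_port even (\<lambda>i. (concat Ls @ rest) ! i) T)"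
  shows "length Ls * (M - C)
       \<le> card (local_output A D {..<n} (band_adj D n) band_port even (\<lambda>i. (concat Ls @ rest) ! i) T)"
proof -
  let ?Ds = "local_output A D {..<n} (band_adj D n) band_port even (\<lambda>i. (concat Ls @ rest) ! i) T"
  have "\<exists>\<delta>::nat. \<delta> \<le> 1 \<and> (\<forall>j < M - C. s*m + (C + 2*j + \<delta>) \<in> ?Ds)" if s: "s < length Ls" for s
  proof -
    have block: "s*m + m \<le> n" using s n(2) by (metis Suc_leI mult_Suc mult_le_mono1 add.commute le_trans)
    have ids: "\<forall>j<m. (concat Ls @ rest) ! (s*m + j) = Ls!s!j"
      using nth_concat_blocks[of Ls m s] Ls s by simp
    have L: "sorted (Ls!s)" "distinct (Ls!s)" "length (Ls!s) = m"
        "homogeneous (window_colour A D n T) (2*(T*(2*D))+1) (set (Ls!s))"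
      using Ls s by auto
    have "even m" using m by simp
    obtain out where "\<And>x. C \<le> x \<Longrightarrow> x + C < m \<Longrightarrow> s*m + x \<in> ?Ds \<longleftrightarrow> out (even x)"
      using block_output_by_colour[OF n(1)[unfolded C_def] block \<open>even m\<close> L ids]
      unfolding C_def by blast
    then show ?thesis
      using dominated_block_colour_class[OF dom block m] M unfolding C_def by simp
  qed
  then obtain \<delta> where \<delta>: "\<forall>s<length Ls. \<delta> s \<le> (1::nat) \<and> (\<forall>j < M - C. s*m + (C + 2*j + \<delta> s) \<in> ?Ds)"
    by metis
  define \<phi> where "\<phi> = (\<lambda>(s,j). s*m + (C + 2*j + \<delta> s))"
  have offset: "C + 2*j + \<delta> s < m" if "s < length Ls" "j < M - C" for s j
    using \<delta> that M m by fastforce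
  have "inj_on \<phi> ({..<length Ls} \<times> {..<M - C})"
  proof (rule inj_onI, clarify)
    fix s j s' j' assume sj: "s < length Ls" "j < M - C" "s' < length Ls" "j' < M - C"
      and eq: "\<phi> (s,j) = \<phi> (s',j')"
    have "\<phi> (s,j) div m = s" using offset[OF sj(1,2)] unfolding \<phi>_def by simp
    moreover have "\<phi> (s',j') div m = s'" using offset[OF sj(3,4)] unfolding \<phi>_def by simp
    ultimately have "s = s'" using eq by simp
    then show "s = s' \<and> j = j'" using eq unfolding \<phi>_def by simp
  qed
  moreover have "\<phi> ` ({..<length Ls} \<times> {..<M - C}) \<subseteq> ?Ds" using \<delta> unfolding \<phi>_def by auto
  moreover have "finite ?Ds" unfolding local_output_def by simp
  ultimately have "card ({..<length Ls} \<times> {..<M - C}) \<le> card ?Ds" by (rule card_inj_on_le)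
  then show ?thesis by (simp add: card_cartesian_product)
qed

text \<open>The block half-length M must make the boundary loss C = (T+1)2D per block negligible,
  and the number Q of segments must make the leftover identifiers (fewer than the Ramsey
  number N) negligible.\<close>
lemma choose_parameters:
  fixes e :: real
  assumes e: "0 < e"
  obtains M N Q :: nat where "C + 2*D < M" "partn_lst {..<N} [2*M, 2*M, 2*M, 2*M] r"
    "real C * (real D + 1) < e * real M" "real N < e * real Q" "2*C + 1 < Q*(2*D+2)"
proof -
  obtain M :: nat where M: "real C * (real D + 1) / e + real C + 2 * real D < real M"
    using reals_Archimedean2 by blast
  obtain N :: nat where N: "partn_lst {..<N} [2*M, 2*M, 2*M, 2*M] r"
    using ramsey_full by blast
  obtain Q :: nat where Q: "real N / e + real C + 1 < real Q"
    using reals_Archimedean2 by blast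
  have "0 \<le> real C * (real D + 1) / e" "0 \<le> real N / e" using e by simp_all
  then have M': "real C * (real D + 1) / e < real M" "real (C + 2*D) < real M"
    and Q': "real N / e < real Q" "real (C + 1) < real Q"
    using M Q by simp_all
  have "real C * (real D + 1) < e * real M" "real N < e * real Q"
    using M'(1) Q'(1) e by (simp_all add: divide_less_eq mult.commute)
  moreover have "C + 2*D < M" "C + 1 < Q" using M'(2) Q'(2) by (simp_all only: of_nat_less_iff)
  moreover have "2*Q \<le> Q*(2*D+2)" by simp
  then have "2*C + 1 < Q*(2*D+2)" using \<open>C + 1 < Q\<close> by linarith
  ultimately show ?thesis using that N by blast
qed

text \<open>The arithmetic core: the output covers nearly half of the n = Q(2D+2) nodes, namely
  about Q(D+1), while the guarantee allows at most ((D+1)/2 - e) 2Q.\<close>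
lemma approximation_gap:
  fixes k M C N Q D :: nat and e \<epsilon> c g :: real
  assumes guarantee: "c \<le> ((real D + 1) / 2 - \<epsilon>) * g" and g: "0 \<le> g" "g \<le> 2 * real Q"
    and e: "0 < e" "e \<le> \<epsilon>" "e \<le> 1" and D: "1 \<le> D"
    and lower: "real (k * (M - C)) \<le> c"
    and size: "Q*(2*D+2) < k*(2*M) + N" "k*(2*M) \<le> Q*(2*D+2)"
    and params: "real C * (real D + 1) < e * real M" "real N < e * real Q"
  shows False
proof -
  have "c \<le> ((real D + 1) / 2 - e) * g"
    using guarantee mult_right_mono[OF _ g(1), of "(real D + 1) / 2 - \<epsilon>" "(real D + 1) / 2 - e"] e(2)
    by linarith
  also have "\<dots> \<le> ((real D + 1) / 2 - e) * (2 * real Q)" using g e D by (intro mult_left_mono) auto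
  finally have upper: "c \<le> real Q * (real D + 1) - 2 * (e * real Q)" by (simp add: algebra_simps)
  have "0 \<le> real C * (real D + 1)" by simp
  then have "0 < e * real M" using params(1) by linarith
  then have M: "0 < real M" using e(1) by (simp add: zero_less_mult_iff)
  have "real (k*(2*M)) \<le> real (Q*(2*D+2))" "real (Q*(2*D+2)) < real (k*(2*M) + N)"
    using size by linarith+
  then have kM: "real k * real M \<le> real Q * (real D + 1)"
      "2 * (real Q * (real D + 1)) < 2 * (real k * real M) + real N"
    by (simp_all add: algebra_simps)
  have "real k * real C * real M \<le> real C * (real Q * (real D + 1))"
    using mult_left_mono[OF kM(1), of "real C"] by (simp add: algebra_simps)
  also have "\<dots> \<le> e * real Q * real M"
    using mult_left_mono[OF less_imp_le[OF params(1)], of "real Q"] by (simp add: algebra_simps)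
  finally have kC: "real k * real C \<le> e * real Q" using M by simp
  have "real C * 1 \<le> real C * (real D + 1)" by (intro mult_left_mono) auto
  moreover have "e * real M \<le> 1 * real M" using e(3) by (intro mult_right_mono) auto
  ultimately have "C \<le> M" using params(1) by simp
  then have "real (k * (M - C)) = real k * real M - real k * real C"
    by (simp add: of_nat_diff algebra_simps)
  moreover have "0 \<le> real N" by simp
  ultimately show False using lower upper kC kM(2) params(2) by linarith
qed

theorem theorem3:
  fixes \<Delta> :: nat and \<epsilon> :: real
  assumes "\<Delta> \<ge> 2" and "\<epsilon> > 0"
  shows "\<not> (\<exists>(A :: ('s, 'm) algorithm) (T :: nat).
           \<forall>V E p col idf.
             graph_ok \<Delta> V E \<and> proper_2col V E col \<and> port_numbering V E p \<and> valid_ids V idf \<longrightarrow>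
             dominating V E (local_output A \<Delta> V E p col idf T) \<and>
             real (card (local_output A \<Delta> V E p col idf T))
               \<le> ((real \<Delta> + 1) / 2 - \<epsilon>) * real (domination_number V E))"
proof (intro notI, elim exE)
  fix A :: "('s, 'm) algorithm" and T :: nat
  assume guarantee: "\<forall>V E p col idf.
             graph_ok \<Delta> V E \<and> proper_2col V E col \<and> port_numbering V E p \<and> valid_ids V idf \<longrightarrow>
             dominating V E (local_output A \<Delta> V E p col idf T) \<and>
             real (card (local_output A \<Delta> V E p col idf T))
               \<le> ((real \<Delta> + 1) / 2 - \<epsilon>) * real (domination_number V E)"
  define e where "e = min \<epsilon> 1"
  have e: "0 < e" "e \<le> \<epsilon>" "e \<le> 1" using assms(2) unfolding e_def by auto
  define C where "C = (T+1)*(2*\<Delta>)"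
  obtain M N Q where params: "C + 2*\<Delta> < M" "partn_lst {..<N} [2*M, 2*M, 2*M, 2*M] (2*(T*(2*\<Delta>))+1)"
      "real C * (real \<Delta> + 1) < e * real M" "real N < e * real Q" "2*C + 1 < Q*(2*\<Delta>+2)"
    using choose_parameters[OF e(1)] by blast
  define n where "n = Q*(2*\<Delta>+2)"
  have "0 < 2*M" using params(1) by simp
  then obtain Ls rest where ids: "valid_ids {..<n} (\<lambda>i. (concat Ls @ rest) ! i)"
      "length Ls * (2*M) + length rest = n" "length rest < N"
      "\<forall>L\<in>set Ls. sorted L \<and> distinct L \<and> length L = 2*M \<and>
         homogeneous (window_colour A \<Delta> n T) (2*(T*(2*\<Delta>))+1) (set L)"
    using block_identifiers[OF params(2) window_colour_lt] by blast
  let ?Ds = "local_output A \<Delta> {..<n} (band_adj \<Delta> n) band_port even (\<lambda>i. (concat Ls @ rest) ! i) T"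
  have "graph_ok \<Delta> {..<n} (band_adj \<Delta> n)" using graph_ok_band assms(1) unfolding n_def by simp
  then have dom: "dominating {..<n} (band_adj \<Delta> n) ?Ds"
    and approx: "real (card ?Ds) \<le> ((real \<Delta> + 1) / 2 - \<epsilon>) * real (domination_number {..<n} (band_adj \<Delta> n))"
    using guarantee proper_2col_band port_numbering_band ids(1) by blast+
  have "2*((T+1)*(2*\<Delta>)) + 1 < n" "length Ls * (2*M) \<le> n"
    using params(5) ids(2) unfolding C_def n_def by linarith+
  then have "length Ls * (M - C) \<le> card ?Ds"
    using output_lower_bound[OF refl params(1)[unfolded C_def] _ _ ids(4) dom] unfolding C_def by blast
  then have lower: "real (length Ls * (M - C)) \<le> real (card ?Ds)" by linarith
  have size: "Q*(2*\<Delta>+2) < length Ls * (2*M) + N" "length Ls * (2*M) \<le> Q*(2*\<Delta>+2)"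
    using ids(2,3) unfolding n_def by linarith+
  have "real (domination_number {..<n} (band_adj \<Delta> n)) \<le> 2 * real Q"
    using domination_number_band[of Q \<Delta>] unfolding n_def by linarith
  then show False
    using approximation_gap[OF approx _ _ e _ lower size params(3,4)] assms(1) by simp
qed

end
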